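(* Let $X$ have the standard Cauchy distribution. Then the distribution function $F(x)=\frac{2}{\pi}\arctan(x)$, $x\ge0$, of $|X|$ satisfies $F\in\mathcal{S}_C$ but $F\notin\mathcal{H}$.
   Context: For a distribution function $G$, $G^{-1}(u)=\inf\{x\in\mathbb{R}:G(x)\ge u\}$ for $0<u<1$. For distribution functions $F,G$, write $F\le_{skew}G$ if the function $x\mapsto G^{-1}(F(x))$ is convex (on the set of $x$ with $0<F(x)<1$). $\mathcal{S}_C=\{G: F_C\le_{skew}G\}$ with $F_C(x)=\frac1\pi\arctan(x)+\frac12$, $x\in\mathbb{R}$. For the distribution function $F$ of a non-negative random variable define $h_F(x)=-\log(F(1/x))$, $x>0$; $\mathcal{H}$ is the class of distribution functions of non-negative random variables for which $h_F$ is subadditive, i.e. $h_F(x+y)\le h_F(x)+h_F(y)$ for all $x,y>0$. *)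

theory Defs
  imports "HOL-Analysis.Analysis"
begin

definition is_distr_fun :: "(real \<Rightarrow> real) \<Rightarrow> bool" where
  "is_distr_fun G \<longleftrightarrow> mono G \<and> (\<forall>x. continuous (at_right x) G)
     \<and> (G \<longlongrightarrow> 0) at_bot \<and> (G \<longlongrightarrow> 1) at_top"

definition gen_inv :: "(real \<Rightarrow> real) \<Rightarrow> real \<Rightarrow> real" where
  "gen_inv G u = Inf {x. G x \<ge> u}"

definition skew_le :: "(real \<Rightarrow> real) \<Rightarrow> (real \<Rightarrow> real) \<Rightarrow> bool" where
  "skew_le F G \<longleftrightarrow> convex_on {x. 0 < F x \<and> F x < 1} (\<lambda>x. gen_inv G (F x))"

definition F_C :: "real \<Rightarrow> real" where
  "F_C x = arctan x / pi + 1/2"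

definition S_C :: "(real \<Rightarrow> real) set" where
  "S_C = {G. is_distr_fun G \<and> skew_le F_C G}"

definition h_fun :: "(real \<Rightarrow> real) \<Rightarrow> real \<Rightarrow> ereal" where
  "h_fun F x = (if F (1/x) = 0 then \<infinity> else ereal (- ln (F (1/x))))"

definition H_class :: "(real \<Rightarrow> real) set" where
  "H_class = {F. is_distr_fun F \<and> (\<forall>x<0. F x = 0) \<and>
     (\<forall>x>0. \<forall>y>0. h_fun F (x + y) \<le> h_fun F x + h_fun F y)}"

end

theory Submission
  imports Defs
begin

text \<open>The generalized inverse of \<open>F\<close> is \<open>u \<mapsto> tan (pi u / 2)\<close>, so
  \<open>F\<^sup>-\<^sup>1 (F\<^sub>C x) = tan (arctan x / 2 + pi / 4) = x + sqrt (1 + x\<^sup>2)\<close>,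
  a convex function since its derivative \<open>1 + sin (arctan x)\<close> is increasing.
  Subadditivity of \<open>h\<^sub>F\<close> at \<open>x = y = 1/10\<close> would mean \<open>F 5 \<ge> (F 10)\<^sup>2\<close>; writing
  \<open>F t = 1 - (2/pi) arctan (1/t)\<close> and bounding \<open>arctan\<close> by its Taylor polynomials
  shows \<open>F 5 < (F 10)\<^sup>2\<close>.\<close>

definition abs_cauchy_cdf :: "real \<Rightarrow> real" where
  "abs_cauchy_cdf x = (if x \<ge> 0 then 2 / pi * arctan x else 0)"

lemma abs_cauchy_cdf_arctan_max: "abs_cauchy_cdf x = 2 / pi * arctan (max x 0)"
  by (simp add: abs_cauchy_cdf_def max_def)

lemma continuous_abs_cauchy_cdf: "continuous_on UNIV abs_cauchy_cdf"
  unfolding abs_cauchy_cdf_arctan_max[abs_def] by (intro continuous_intros)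

lemma mono_abs_cauchy_cdf: "mono abs_cauchy_cdf"
proof (rule monoI)
  fix x y :: real
  assume "x \<le> y"
  then have "arctan (max x 0) \<le> arctan (max y 0)" by (simp add: arctan_le_iff)
  then show "abs_cauchy_cdf x \<le> abs_cauchy_cdf y"
    by (simp add: abs_cauchy_cdf_arctan_max divide_right_mono)
qed

lemma abs_cauchy_cdf_at_top: "(abs_cauchy_cdf \<longlongrightarrow> 1) at_top"
proof -
  have "((\<lambda>x. 2 / pi * arctan x) \<longlongrightarrow> 2 / pi * (pi / 2)) at_top"
    by (intro tendsto_intros tendsto_arctan_at_top)
  then have "((\<lambda>x. 2 / pi * arctan x) \<longlongrightarrow> 1) at_top" by simp
  then show ?thesis
    by (rule Lim_transform_eventually)
       (auto simp: abs_cauchy_cdf_def intro: eventually_mono[OF eventually_ge_at_top[of 0]])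
qed

lemma abs_cauchy_cdf_at_bot: "(abs_cauchy_cdf \<longlongrightarrow> 0) at_bot"
  by (rule Lim_transform_eventually[OF tendsto_const])
     (auto simp: abs_cauchy_cdf_def intro: eventually_mono[OF eventually_le_at_bot[of "-1"]])

lemma is_distr_fun_abs_cauchy_cdf: "is_distr_fun abs_cauchy_cdf"
  unfolding is_distr_fun_def
  using mono_abs_cauchy_cdf abs_cauchy_cdf_at_bot abs_cauchy_cdf_at_top
    continuous_on_imp_continuous_within[OF continuous_abs_cauchy_cdf]
  by blast

lemma abs_cauchy_cdf_ge_iff:
  assumes "0 < u" "u < 1"
  shows "u \<le> abs_cauchy_cdf x \<longleftrightarrow> tan (pi * u / 2) \<le> x"
proof -
  have t: "0 < pi * u / 2" "pi * u / 2 < pi / 2" using assms by auto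
  then have "tan (pi * u / 2) > 0" by (intro tan_gt_zero) auto
  moreover have "arctan (tan (pi * u / 2)) = pi * u / 2" using t by (intro arctan_tan) linarith+
  then have "u \<le> 2 / pi * arctan x \<longleftrightarrow> arctan (tan (pi * u / 2)) \<le> arctan x"
    by (auto simp: field_simps)
  then have "u \<le> 2 / pi * arctan x \<longleftrightarrow> tan (pi * u / 2) \<le> x"
    by (simp add: arctan_le_iff)
  ultimately show ?thesis using assms by (auto simp: abs_cauchy_cdf_def)
qed

lemma gen_inv_abs_cauchy_cdf:
  assumes "0 < u" "u < 1"
  shows "gen_inv abs_cauchy_cdf u = tan (pi * u / 2)"
proof -
  have "{x. u \<le> abs_cauchy_cdf x} = {tan (pi * u / 2)..}"
    using abs_cauchy_cdf_ge_iff[OF assms] by auto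
  then show ?thesis by (simp add: gen_inv_def)
qed

lemma F_C_bounds: "0 < F_C x" "F_C x < 1"
  using arctan_bounded[of x] by (auto simp: F_C_def field_simps)

lemma tan_half_arctan_add_pi_4:
  fixes x :: real
  shows "tan (arctan x / 2 + pi / 4) = x + sqrt (1 + x\<^sup>2)"
proof -
  define s where "s = sqrt (1 + x\<^sup>2)"
  have "\<bar>x\<bar> < s"
    unfolding s_def by (rule real_less_rsqrt) simp
  then have "s > 0" "s - x > 0" by linarith+
  have "tan (arctan x / 2 + pi / 4) = cos (arctan x) / (1 - sin (arctan x))"
    using tan_half[of "arctan x / 2 + pi / 4"] by (simp add: algebra_simps sin_add cos_add)
  also have "\<dots> = (1 / s) / (1 - x / s)"
    by (simp add: cos_arctan sin_arctan s_def)
  also have "\<dots> = 1 / (s - x)"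
    using \<open>s > 0\<close> by (simp add: field_simps)
  also have "\<dots> = x + s"
  proof -
    have "(s - x) * (s + x) = 1"
      unfolding s_def by (simp add: algebra_simps power2_eq_square[symmetric])
    then show ?thesis using \<open>s - x > 0\<close> by (simp add: field_simps)
  qed
  finally show ?thesis unfolding s_def .
qed

lemma gen_inv_abs_cauchy_cdf_F_C: "gen_inv abs_cauchy_cdf (F_C x) = x + sqrt (1 + x\<^sup>2)"
proof -
  have "pi * F_C x / 2 = arctan x / 2 + pi / 4" by (simp add: F_C_def field_simps)
  then show ?thesis
    by (simp only: gen_inv_abs_cauchy_cdf[OF F_C_bounds] tan_half_arctan_add_pi_4)
qed

lemma convex_on_add_sqrt_one_plus_sq: "convex_on UNIV (\<lambda>x::real. x + sqrt (1 + x\<^sup>2))"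
proof (rule convex_on_realI[where f' = "\<lambda>x. 1 + x / sqrt (1 + x\<^sup>2)"])
  fix x :: real
  show "((\<lambda>x. x + sqrt (1 + x\<^sup>2)) has_real_derivative 1 + x / sqrt (1 + x\<^sup>2)) (at x)"
    using add_pos_nonneg[OF zero_less_one zero_le_power2[of x]]
    by (auto intro!: derivative_eq_intros simp: field_simps)
next
  fix x y :: real
  assume "x \<le> y"
  then have "sin (arctan x) \<le> sin (arctan y)"
    using arctan_bounded[of x] arctan_bounded[of y]
    by (intro sin_monotone_2pi_le) (auto simp: arctan_le_iff)
  then show "1 + x / sqrt (1 + x\<^sup>2) \<le> 1 + y / sqrt (1 + y\<^sup>2)"
    by (simp add: sin_arctan)
qed auto

lemma skew_le_F_C_abs_cauchy_cdf: "skew_le F_C abs_cauchy_cdf"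
proof -
  have "{x. 0 < F_C x \<and> F_C x < 1} = UNIV" using F_C_bounds by auto
  then show ?thesis
    unfolding skew_le_def gen_inv_abs_cauchy_cdf_F_C
    using convex_on_add_sqrt_one_plus_sq by simp
qed

lemma h_fun_add_gt:
  assumes "0 < F (1 / x)" "0 < F (1 / y)" "0 \<le> F (1 / (x + y))"
    and "F (1 / (x + y)) < F (1 / x) * F (1 / y)"
  shows "h_fun F x + h_fun F y < h_fun F (x + y)"
proof (cases "F (1 / (x + y)) = 0")
  case True
  then show ?thesis using assms(1,2) by (simp add: h_fun_def)
next
  case False
  then have "ln (F (1 / (x + y))) < ln (F (1 / x) * F (1 / y))"
    using assms by (intro ln_less_cancel_iff[THEN iffD2]) auto
  then show ?thesis using assms(1,2) False by (simp add: h_fun_def ln_mult)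
qed

lemma abs_cauchy_cdf_5_lt_sq_10: "abs_cauchy_cdf 5 < (abs_cauchy_cdf 10)\<^sup>2"
proof -
  have "pi < 4" "pi > 3" using pi_less_4 pi_gt3 by auto
  have a: "arctan (1/10) \<le> 1/10" by (rule arctan_le_self) simp
  have b: "1/5 - (1/5)^3/3 \<le> arctan (1/5)"
    using arctan_lower_bound[of "1/5" 1] by (simp add: numeral_eq_Suc)
  have F10: "abs_cauchy_cdf 10 = 1 - 2/pi * arctan (1/10)"
    using arctan_inverse[of 10] by (simp add: abs_cauchy_cdf_def inverse_eq_divide field_simps)
  have F5: "abs_cauchy_cdf 5 = 1 - 2/pi * arctan (1/5)"
    using arctan_inverse[of 5] by (simp add: abs_cauchy_cdf_def inverse_eq_divide field_simps)
  have "abs_cauchy_cdf 5 \<le> 1 - 2/pi * (1/5 - (1/5)^3/3)"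
    unfolding F5 using b \<open>pi > 3\<close> by (simp add: field_simps)
  also have "\<dots> < (1 - 2/pi * (1/10))\<^sup>2"
    using \<open>pi < 4\<close> \<open>pi > 3\<close> by (simp add: field_simps power2_eq_square)
  also have "\<dots> \<le> (abs_cauchy_cdf 10)\<^sup>2"
    unfolding F10 using a \<open>pi > 3\<close> by (intro power_mono) (simp_all add: field_simps)
  finally show ?thesis .
qed

lemma abs_cauchy_cdf_not_in_H_class: "abs_cauchy_cdf \<notin> H_class"
proof
  let ?h = "h_fun abs_cauchy_cdf"
  assume "abs_cauchy_cdf \<in> H_class"
  then have "\<forall>x>0. \<forall>y>0. ?h (x + y) \<le> ?h x + ?h y"
    unfolding H_class_def by blast
  then have subadd: "?h (1/10 + 1/10) \<le> ?h (1/10) + ?h (1/10)"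
    by (meson zero_less_divide_1_iff zero_less_numeral)
  have "0 < abs_cauchy_cdf 10" "0 \<le> abs_cauchy_cdf 5"
    by (simp_all add: abs_cauchy_cdf_def)
  then have "?h (1/10) + ?h (1/10) < ?h (1/10 + 1/10)"
    using abs_cauchy_cdf_5_lt_sq_10 by (intro h_fun_add_gt) (simp_all add: power2_eq_square)
  with subadd show False by simp
qed

theorem mainTheorem9:
  fixes F :: "real \<Rightarrow> real"
  defines "F \<equiv> (\<lambda>x. if x \<ge> 0 then 2 / pi * arctan x else 0)"
  shows "F \<in> S_C \<and> F \<notin> H_class"
proof -
  have "F = abs_cauchy_cdf" unfolding F_def abs_cauchy_cdf_def by (rule refl)
  then show ?thesis
    using is_distr_fun_abs_cauchy_cdf skew_le_F_C_abs_cauchy_cdf abs_cauchy_cdf_not_in_H_class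
    by (simp add: S_C_def)
qed

end
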